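(* Let $\mathbf x=(k,S,\Lambda)$ be a combinatorial $k$-parameter with $S$ a set of ordinals, and let $F$ be a regressive function on $\mathbf x$ which is finitary or simple. Then $(\mathbf x,F)$ is $\aleph_{k+1}$-free, i.e. every $\Lambda'\subseteq\Lambda$ with $|\Lambda'|\le\aleph_k$ is free for $(\mathbf x,F)$.
   Context: For a set $S$, ${}^\omega S$ is the set of functions $\omega\to S$. A combinatorial $k$-parameter is $(k,S,\Lambda)$ with $k<\omega$, $S$ a set, $\Lambda\subseteq{}^{k+1}({}^\omega S)$ (sequences $\bar\eta=\langle\eta_0,\dots,\eta_k\rangle$, $\eta_\ell\in{}^\omega S$). For $\bar\eta\in\Lambda$, $m\le k$, $n<\omega$, $\bar\eta\upharpoonleft\langle m,n\rangle$ is the sequence obtained from $\bar\eta$ by replacing $\eta_m$ with $\eta_m\restriction n$; $\Lambda_m=\{\bar\eta\upharpoonleft\langle m,n\rangle:\bar\eta\in\Lambda,n<\omega\}$, $\Lambda_{\le k}=\bigcup_{m\le k}\Lambda_m$. A function $F$ is regressive on $\mathbf x$ if: $\mathrm{dom}(F)=\Lambda$; each $F(\bar\eta)$ is a countable subset of $\Lambda\cup\Lambda_{\le k}$; and for every $\bar\eta\in\Lambda$ and $\ell\le k$, $\sup\mathrm{Rang}(\eta_\ell)>\sup\bigcup\{\mathrm{Rang}(\nu_\ell):\bar\nu\in F(\bar\eta)\}$. $F$ is finitary if each $F(\bar\eta)$ is finite, and simple if $F(\bar\eta)$ depends only on $\eta_k(0)$. A set $\Lambda'\subseteq\Lambda$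 is free for $(\mathbf x,F)$ if there are an enumeration $\langle\bar\eta^\alpha:\alpha<\alpha( * )\rangle$ of $\Lambda''=\Lambda'\cup\bigcup\{F(\bar\eta):\bar\eta\in\Lambda'\}$ and $\ell_\alpha\le k$ ($\alpha<\alpha( * )$) such that for every $\alpha<\alpha( * )$ with $\bar\eta^\alpha\in\Lambda'$: (i) $F(\bar\eta^\alpha)\subseteq\{\bar\eta^\beta,\ \bar\eta^\beta\upharpoonleft\langle m,n\rangle:\beta<\alpha,m\le k,n<\omega\}$, and (ii) for some $n<\omega$, $\bar\eta^\alpha\upharpoonleft\langle\ell_\alpha,n\rangle\notin\{\bar\eta^\beta\upharpoonleft\langle\ell_\alpha,n\rangle:\beta<\alpha,\ \bar\eta^\beta\in\Lambda'\}\cup\{\bar\eta^\beta:\beta<\alpha\}$. $(\mathbf x,F)$ is $\theta$-free if every $\Lambda'\subseteq\Lambda$ of cardinality $<\theta$ is free for $(\mathbf x,F)$. *)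

theory Defs
  imports Main "HOL-Library.Countable_Set"
begin

text \<open>Sequences in S: either finite (Inl, a list = a function n -> S)
  or of length omega (Inr, a function nat -> S).\<close>
type_synonym 'a seq = "'a list + (nat \<Rightarrow> 'a)"

fun rng :: "'a seq \<Rightarrow> 'a set" where
  "rng (Inl xs) = set xs"
| "rng (Inr f) = range f"

fun trunc :: "'a seq \<Rightarrow> nat \<Rightarrow> 'a seq" where
  "trunc (Inl xs) n = Inl (take n xs)"
| "trunc (Inr f) n = Inl (map f [0..<n])"

fun first :: "'a seq \<Rightarrow> 'a" where
  "first (Inr f) = f 0"
| "first (Inl xs) = hd xs"

text \<open>Tuples eta = <eta_0,...,eta_k> are lists of length k+1.
  restr eta m n is eta restricted at <m,n>: eta_m replaced by eta_m|n.\<close>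
definition restr :: "'a seq list \<Rightarrow> nat \<Rightarrow> nat \<Rightarrow> 'a seq list" where
  "restr eta m n = eta[m := trunc (eta ! m) n]"

definition comb_param :: "nat \<Rightarrow> 'a set \<Rightarrow> 'a seq list set \<Rightarrow> bool" where
  "comb_param k S Lam \<longleftrightarrow>
     (\<forall>eta\<in>Lam. length eta = Suc k \<and> (\<forall>l\<le>k. \<exists>f. eta ! l = Inr f \<and> range f \<subseteq> S))"

definition Lam_m :: "'a seq list set \<Rightarrow> nat \<Rightarrow> 'a seq list set" where
  "Lam_m Lam m = {restr eta m n | eta n. eta \<in> Lam}"

definition Lam_le :: "nat \<Rightarrow> 'a seq list set \<Rightarrow> 'a seq list set" where
  "Lam_le k Lam = (\<Union>m\<le>k. Lam_m Lam m)"

definition regressive ::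
  "nat \<Rightarrow> ('a::complete_lattice) seq list set \<Rightarrow> ('a seq list \<Rightarrow> 'a seq list set) \<Rightarrow> bool" where
  "regressive k Lam F \<longleftrightarrow>
     (\<forall>eta\<in>Lam. countable (F eta) \<and> F eta \<subseteq> Lam \<union> Lam_le k Lam \<and>
        (\<forall>l\<le>k. Sup (\<Union>nu\<in>F eta. rng (nu ! l)) < Sup (rng (eta ! l))))"

definition finitary :: "'a seq list set \<Rightarrow> ('a seq list \<Rightarrow> 'a seq list set) \<Rightarrow> bool" where
  "finitary Lam F \<longleftrightarrow> (\<forall>eta\<in>Lam. finite (F eta))"

definition simple :: "nat \<Rightarrow> 'a seq list set \<Rightarrow> ('a seq list \<Rightarrow> 'a seq list set) \<Rightarrow> bool" where
  "simple k Lam F \<longleftrightarrow>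
     (\<forall>eta\<in>Lam. \<forall>nu\<in>Lam. first (eta ! k) = first (nu ! k) \<longrightarrow> F eta = F nu)"

text \<open>The enumeration <eta^alpha : alpha < alpha(*)> of Lam'' is given as a
  well-order r with field Lam'' (beta < alpha iff (nu,eta) in r, nu ~= eta); the
  index l_alpha is given as a function ell of the enumerated element.\<close>
definition free_for ::
  "nat \<Rightarrow> 'a seq list set \<Rightarrow> ('a seq list \<Rightarrow> 'a seq list set) \<Rightarrow> 'a seq list set \<Rightarrow> bool" where
  "free_for k Lam F Lam' \<longleftrightarrow>
     (\<exists>r ell. Well_order r \<and> Field r = Lam' \<union> (\<Union>eta\<in>Lam'. F eta) \<and>
        (\<forall>eta\<in>Field r. ell eta \<le> k) \<and>
        (\<forall>eta\<in>Lam'.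
           F eta \<subseteq> {nu. (nu, eta) \<in> r \<and> nu \<noteq> eta}
                    \<union> {restr nu m n | nu m n. (nu, eta) \<in> r \<and> nu \<noteq> eta \<and> m \<le> k} \<and>
           (\<exists>n. restr eta (ell eta) n \<notin>
                  {restr nu (ell eta) n | nu. (nu, eta) \<in> r \<and> nu \<noteq> eta \<and> nu \<in> Lam'}
                  \<union> {nu. (nu, eta) \<in> r \<and> nu \<noteq> eta})))"

text \<open>le_aleph k A: |A| <= aleph_k, with aleph_0 = natLeq and aleph_(k+1) = cardSuc aleph_k.\<close>
fun le_aleph :: "nat \<Rightarrow> 'a set \<Rightarrow> bool" where
  "le_aleph 0 A = ((card_of A, natLeq) \<in> ordLeq)"
| "le_aleph (Suc k) A = (\<exists>B. le_aleph k B \<and> (card_of A, cardSuc (card_of B)) \<in> ordLeq)"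

end

(*
  One proves by induction on j a stronger statement: if |X| \<le> \<aleph>_j and
  every \<eta> \<in> X carries a set L \<eta> of more than j coordinates, then X has a well-order in which
  the members of F \<eta> come before \<eta>, and every \<eta> is separated, at some coordinate l \<in> L \<eta>,
  from all earlier \<nu>: for all large n, \<eta>|\<langle>l,n\<rangle> differs from \<nu>|\<langle>l,n\<rangle> and is not in F \<nu>.

  Countable X is ordered by a key into a well-ordered type. If F is finitary, the key starts with
  the largest enumeration index of an F-ancestor, so every \<eta> has finitely many predecessors and
  only finitely many n are bad. If F is simple, the key starts with sup \<Union>{rng \<nu>_k | \<nu> \<in> F \<eta>}:
  then \<eta>|\<langle>l,n\<rangle> eventually has too large a k-th coordinate to lie in F \<nu>, and an earlier \<nu> with
  \<nu>|\<langle>l,n\<rangle> = \<eta>|\<langle>l,n\<rangle> and n > 0 has \<nu>_k(0) = \<eta>_k(0), hence F \<nu> = F \<eta>, and is one of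
  finitely many elements with a smaller enumeration index.

  If |X| \<le> \<aleph>_(j+1), well-order X by its cardinal order and close each initial segment under F
  and under forming tuples of coordinates; these stages have size \<le> \<aleph>_j. An element \<eta> of a
  layer (the elements first appearing at a stage) does not have all its coordinates among those of
  earlier layers, so some coordinate \<eta>_l' is new, and this separates \<eta> at every l \<noteq> l' from
  all elements of earlier layers. Ordering layer by layer, each layer by the induction hypothesis
  for L \<eta> - {l'}, gives the required well-order.

  For j = k and L \<eta> = {0..k}, inserting the members of F \<eta> just before the first \<eta> using them
  turns this well-order into the enumeration required by freeness.
*)

theory Submission
  imports Defs "HOL-Library.Product_Lexorder" "HOL-Library.Countable_Set_Type"
begin

unbundle cardinal_syntax

section \<open>Well-orders\<close>

lemma Well_order_lin:
  assumes "Well_order r"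
  shows "refl_on (Field r) r" "trans r" "antisym r" "total_on (Field r) r"
  using assms by (simp_all add: well_order_on_def linear_order_on_def partial_order_on_def
      preorder_on_def)

lemma Well_order_minimal:
  assumes "Well_order r" "B \<subseteq> Field r" "B \<noteq> {}"
  obtains a where "a \<in> B" "\<And>b. b \<in> B \<Longrightarrow> (a, b) \<in> r"
  using assms wo_rel.minim_in wo_rel.minim_least unfolding wo_rel_def by metis

lemma Well_order_finite_max:
  assumes W: "Well_order W" and "finite A" "A \<noteq> {}" "A \<subseteq> Field W"
  shows "\<exists>m \<in> A. \<forall>x \<in> A. (x, m) \<in> W"
  using assms(2-4)
proof (induction A rule: finite_ne_induct)
  case (singleton x)
  then show ?case using Well_order_lin(1)[OF W] by (simp add: refl_on_def)
next
  case (insert x A)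
  then obtain m where m: "m \<in> A" "\<forall>y \<in> A. (y, m) \<in> W" by auto
  let ?M = "wo_rel.max2 W x m"
  have "x \<in> Field W" "m \<in> Field W" using insert m by auto
  then have M: "(x, ?M) \<in> W \<and> (m, ?M) \<in> W \<and> ?M \<in> {x, m}"
    using wo_rel.max2_greater_among[of W x m] W unfolding wo_rel_def by blast
  then have "\<forall>y \<in> insert x A. (y, ?M) \<in> W"
    using m Well_order_lin(2)[OF W] by (auto dest: transD)
  moreover have "?M \<in> insert x A" using M m by auto
  ultimately show ?case by blast
qed

definition lex_sum :: "'i rel \<Rightarrow> ('x \<Rightarrow> 'i) \<Rightarrow> ('i \<Rightarrow> 'x rel) \<Rightarrow> 'x set \<Rightarrow> 'x rel" where
  "lex_sum W f Q A = {(x, y). x \<in> A \<and> y \<in> A \<and>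
     ((f x, f y) \<in> W \<and> f x \<noteq> f y \<or> f x = f y \<and> (x, y) \<in> Q (f x))}"

lemma Linear_order_lex_sum:
  assumes W: "Well_order W" and f: "f ` A \<subseteq> Field W"
    and Q: "\<And>a. a \<in> Field W \<Longrightarrow> Well_order (Q a) \<and> Field (Q a) = {x \<in> A. f x = a}"
  shows "Linear_order (lex_sum W f Q A)" and "Field (lex_sum W f Q A) = A"
proof -
  let ?R = "lex_sum W f Q A"
  have Q_of: "Well_order (Q (f x)) \<and> Field (Q (f x)) = {y \<in> A. f y = f x}" if "x \<in> A" for x
    using Q f that by blast
  have Q_refl: "(x, x) \<in> Q (f x)" if "x \<in> A" for x
  proof -
    have "Well_order (Q (f x))" "x \<in> Field (Q (f x))" using Q_of[OF that] that by auto
    then show ?thesis using Well_order_lin(1)[of "Q (f x)"] by (simp add: refl_onD)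
  qed
  show Field: "Field ?R = A"
    using Q_refl unfolding lex_sum_def Field_def by blast
  note W_lin = Well_order_lin[OF W]
  have Q_lin: "trans (Q (f x)) \<and> antisym (Q (f x)) \<and> total_on {y \<in> A. f y = f x} (Q (f x))"
    if "x \<in> A" for x
  proof -
    have "Well_order (Q (f x))" "Field (Q (f x)) = {y \<in> A. f y = f x}" using Q_of[OF that] by auto
    then show ?thesis using Well_order_lin(2-4)[of "Q (f x)"] by simp
  qed
  show "Linear_order ?R"
    unfolding Field linear_order_on_def partial_order_on_def preorder_on_def
  proof (intro conjI)
    show "?R \<subseteq> A \<times> A"
      unfolding lex_sum_def by auto
    show "refl_on A ?R"
      using Q_refl unfolding refl_on_def lex_sum_def by auto
    show "trans ?R"
      unfolding trans_def lex_sum_def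
      using W_lin(2,3) Q_lin f by (auto dest: transD antisymD) (metis transD)+
    show "antisym ?R"
      unfolding antisym_def lex_sum_def using W_lin(3) Q_lin by (auto dest: antisymD) (metis antisymD)
    show "total_on A ?R"
    proof (rule total_onI)
      fix x y assume "x \<in> A" "y \<in> A" "x \<noteq> y"
      moreover have "f x \<in> Field W" "f y \<in> Field W" using f \<open>x \<in> A\<close> \<open>y \<in> A\<close> by auto
      ultimately show "(x, y) \<in> ?R \<or> (y, x) \<in> ?R"
        using W_lin(4) Q_lin[of x] unfolding lex_sum_def total_on_def
        by (cases "f x = f y") auto
    qed
  qed
qed

lemma Well_order_lex_sum:
  assumes W: "Well_order W" and f: "f ` A \<subseteq> Field W"
    and Q: "\<And>a. a \<in> Field W \<Longrightarrow> Well_order (Q a) \<and> Field (Q a) = {x \<in> A. f x = a}"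
  shows "Well_order (lex_sum W f Q A)" and "Field (lex_sum W f Q A) = A"
proof -
  let ?R = "lex_sum W f Q A"
  note lin = Linear_order_lex_sum[OF W f Q]
  show Field: "Field ?R = A" by (rule lin(2))
  from lin(1) show "Well_order ?R"
  proof (subst Linear_order_Well_order_iff, blast, intro allI impI)
    fix B assume B: "B \<subseteq> Field ?R" "B \<noteq> {}"
    then have "f ` B \<subseteq> Field W" "f ` B \<noteq> {}" using f Field by auto
    then obtain a where a: "a \<in> f ` B" "\<And>b. b \<in> f ` B \<Longrightarrow> (a, b) \<in> W"
      using Well_order_minimal[OF W] by metis
    then obtain x where x: "x \<in> B" "a = f x" by blast
    have xA: "x \<in> A" using x B Field by auto
    let ?B = "{y \<in> B. f y = a}"
    have "Well_order (Q a)" "?B \<subseteq> Field (Q a)" "?B \<noteq> {}"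
      using Q[of a] f xA x B Field by auto
    then obtain z where z: "z \<in> ?B" "\<And>y. y \<in> ?B \<Longrightarrow> (z, y) \<in> Q a"
      by (rule Well_order_minimal) blast
    have "(z, y) \<in> ?R" if "y \<in> B" for y
    proof (cases "f y = a")
      case True
      then show ?thesis using z that x B Field unfolding lex_sum_def by auto
    next
      case False
      then show ?thesis using z that a(2)[of "f y"] B Field unfolding lex_sum_def by auto
    qed
    then show "\<exists>z \<in> B. \<forall>y \<in> B. (z, y) \<in> ?R" using z by blast
  qed
qed

lemma Well_order_add_top:
  assumes r: "Well_order r" and a: "a \<notin> Field r"
  shows "Well_order (r \<union> insert a (Field r) \<times> {a})" (is "Well_order ?R")
    and "Field (r \<union> insert a (Field r) \<times> {a}) = insert a (Field r)"
proof -
  show Field: "Field ?R = insert a (Field r)"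
    unfolding Field_def by auto
  note r_lin = Well_order_lin[OF r]
  have "Linear_order ?R"
    unfolding Field linear_order_on_def partial_order_on_def preorder_on_def
  proof (intro conjI)
    show "?R \<subseteq> insert a (Field r) \<times> insert a (Field r)"
      by (auto intro: FieldI1 FieldI2)
    show "refl_on (insert a (Field r)) ?R"
      using r_lin(1) unfolding refl_on_def by auto
    show "trans ?R"
      using r_lin(2) a unfolding trans_def by (auto intro: FieldI1 FieldI2)
    show "antisym ?R"
      using r_lin(3) a unfolding antisym_def by (auto intro: FieldI1 FieldI2)
    show "total_on (insert a (Field r)) ?R"
      using r_lin(4) unfolding total_on_def by auto
  qed
  moreover have "wf (?R - Id)"
  proof -
    have "wf (r - Id)" using r by (simp add: well_order_on_def)
    moreover have "wf (Field r \<times> {a})" using a by (intro wf_no_loop) auto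
    moreover have "Domain (r - Id) \<inter> Range (Field r \<times> {a}) = {}"
      using a by (auto intro: FieldI1)
    ultimately have "wf ((r - Id) \<union> Field r \<times> {a})" by (rule wf_Un)
    moreover have "?R - Id \<subseteq> (r - Id) \<union> Field r \<times> {a}" by auto
    ultimately show ?thesis by (rule wf_subset)
  qed
  ultimately show "Well_order ?R" by (simp add: well_order_on_def)
qed

definition key_order :: "('x \<Rightarrow> 'b::wellorder) \<Rightarrow> 'x set \<Rightarrow> 'x rel" where
  "key_order g A = {(x, y). x \<in> A \<and> y \<in> A \<and> g x \<le> g y}"

lemma Well_order_key_order:
  assumes "inj_on g A"
  shows "Well_order (key_order g A)" and "Field (key_order g A) = A"
proof -
  show Field: "Field (key_order g A) = A"
    unfolding key_order_def Field_def by auto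
  have "Linear_order (key_order g A)"
    unfolding Field linear_order_on_def partial_order_on_def preorder_on_def
  proof (intro conjI)
    show "key_order g A \<subseteq> A \<times> A" "refl_on A (key_order g A)"
      unfolding key_order_def refl_on_def by auto
    show "trans (key_order g A)"
      unfolding key_order_def trans_def by auto
    show "antisym (key_order g A)"
      using assms unfolding key_order_def antisym_def inj_on_def by auto
    show "total_on A (key_order g A)"
      unfolding key_order_def total_on_def by auto
  qed
  moreover have "wf (key_order g A - Id)"
  proof (rule wf_subset)
    show "wf (inv_image {(x, y). x < y} g)" by (rule wf_inv_image[OF wf])
    show "key_order g A - Id \<subseteq> inv_image {(x, y). x < y} g"
      using assms unfolding key_order_def inj_on_def by (auto simp: le_less)
  qed
  ultimately show "Well_order (key_order g A)" by (simp add: well_order_on_def)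
qed

lemma Well_order_with_last:
  assumes "w \<in> B"
  obtains Q where "Well_order Q" "Field Q = B" "\<And>y. y \<in> B \<Longrightarrow> (y, w) \<in> Q"
proof -
  obtain T where "well_order_on (B - {w}) T" using well_order_on by blast
  then have T: "Well_order T" "Field T = B - {w}" using well_order_on_Well_order by blast+
  then have "w \<notin> Field T" by simp
  note top = Well_order_add_top[OF T(1) this]
  show thesis
  proof (rule that[of "T \<union> insert w (Field T) \<times> {w}"])
    show "Field (T \<union> insert w (Field T) \<times> {w}) = B" using top(2) T(2) assms by auto
  qed (use top(1) T(2) in auto)
qed

lemma Well_order_along_retraction:
  assumes R: "Well_order R" and sub: "Field R \<subseteq> B" and f: "f ` B \<subseteq> Field R"
    and retr: "\<And>w. w \<in> Field R \<Longrightarrow> f w = w"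
  obtains r where "Well_order r" "Field r = B"
    and "\<And>y. y \<in> B \<Longrightarrow> (y, f y) \<in> r"
    and "\<And>y eta. y \<in> B \<Longrightarrow> eta \<in> Field R \<Longrightarrow> (f y, eta) \<in> R \<Longrightarrow> f y \<noteq> eta \<Longrightarrow> (y, eta) \<in> r"
    and "\<And>y eta. eta \<in> Field R \<Longrightarrow> (y, eta) \<in> r \<Longrightarrow> (f y, eta) \<in> R"
proof -
  let ?fib = "\<lambda>w. {y \<in> B. f y = w}"
  have "\<exists>Q. Well_order Q \<and> Field Q = ?fib w \<and> (\<forall>y \<in> ?fib w. (y, w) \<in> Q)"
    if "w \<in> Field R" for w
  proof -
    have "w \<in> ?fib w" using that sub retr by auto
    then obtain Q where "Well_order Q" "Field Q = ?fib w" "\<And>y. y \<in> ?fib w \<Longrightarrow> (y, w) \<in> Q"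
      by (rule Well_order_with_last) blast
    then show ?thesis by blast
  qed
  then have "\<forall>w \<in> Field R. \<exists>Q. Well_order Q \<and> Field Q = ?fib w \<and> (\<forall>y \<in> ?fib w. (y, w) \<in> Q)"
    by blast
  from bchoice[OF this] obtain Q
    where Q_all: "\<forall>w \<in> Field R. Well_order (Q w) \<and> Field (Q w) = ?fib w \<and> (\<forall>y \<in> ?fib w. (y, w) \<in> Q w)" ..
  then have Q: "\<And>w. w \<in> Field R \<Longrightarrow> Well_order (Q w) \<and> Field (Q w) = ?fib w"
    and Q_last: "\<And>y. y \<in> B \<Longrightarrow> (y, f y) \<in> Q (f y)"
    using f by blast+
  define r where "r = lex_sum R f Q B"
  note r = Well_order_lex_sum[OF R f Q, folded r_def]
  have R_refl: "(w, w) \<in> R" if "w \<in> Field R" for w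
    using Well_order_lin(1)[OF R] that by (simp add: refl_onD)
  show thesis
  proof (rule that[OF r])
    show "(y, f y) \<in> r" if "y \<in> B" for y
      using Q_last[OF that] that f sub retr unfolding r_def lex_sum_def by auto
    show "(y, eta) \<in> r" if "y \<in> B" "eta \<in> Field R" "(f y, eta) \<in> R" "f y \<noteq> eta" for y eta
      using that sub retr unfolding r_def lex_sum_def by auto
    show "(f y, eta) \<in> R" if "eta \<in> Field R" "(y, eta) \<in> r" for y eta
      using that retr R_refl unfolding r_def lex_sum_def by auto
  qed
qed

lemma Well_order_extend_to_images:
  assumes R: "Well_order R" "Field R = A"
    and G: "\<And>eta x. eta \<in> A \<Longrightarrow> x \<in> G eta \<inter> A \<Longrightarrow> (x, eta) \<in> R \<and> x \<noteq> eta"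
  obtains r where "Well_order r" "Field r = A \<union> \<Union>(G ` A)"
    and "\<And>eta x. eta \<in> A \<Longrightarrow> x \<in> G eta \<Longrightarrow> (x, eta) \<in> r \<and> x \<noteq> eta"
    and "\<And>eta y. eta \<in> A \<Longrightarrow> (y, eta) \<in> r \<Longrightarrow> y \<in> A \<Longrightarrow> (y, eta) \<in> R"
    and "\<And>eta y. eta \<in> A \<Longrightarrow> (y, eta) \<in> r \<Longrightarrow> y \<notin> A \<Longrightarrow> \<exists>w \<in> A. y \<in> G w \<and> (w, eta) \<in> R"
proof -
  let ?B = "A \<union> \<Union>(G ` A)"
  \<comment> \<open>Each new element is placed just before the first element of \<open>A\<close> whose image contains it.\<close>
  define user where "user y = wo_rel.minim R {w \<in> A. y \<in> G w}" for y
  have user: "user y \<in> A \<and> y \<in> G (user y)"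
    and user_least: "\<And>w. w \<in> A \<Longrightarrow> y \<in> G w \<Longrightarrow> (user y, w) \<in> R"
    if "y \<in> ?B - A" for y
  proof -
    have sub: "{w \<in> A. y \<in> G w} \<subseteq> Field R" and "{w \<in> A. y \<in> G w} \<noteq> {}"
      using R(2) that by auto
    then show "user y \<in> A \<and> y \<in> G (user y)"
      unfolding user_def using wo_rel.minim_in R(1) unfolding wo_rel_def by blast
    show "(user y, w) \<in> R" if "w \<in> A" "y \<in> G w" for w
      unfolding user_def using wo_rel.minim_least[OF _ sub, of w] R(1) that
      unfolding wo_rel_def by blast
  qed
  define f where "f y = (if y \<in> A then y else user y)" for y
  have "Field R \<subseteq> ?B" "f ` ?B \<subseteq> Field R" "\<And>w. w \<in> Field R \<Longrightarrow> f w = w"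
    using user R(2) unfolding f_def by auto
  then obtain r where r: "Well_order r" "Field r = ?B"
    and r_last: "\<And>y. y \<in> ?B \<Longrightarrow> (y, f y) \<in> r"
    and r_R: "\<And>y eta. y \<in> ?B \<Longrightarrow> eta \<in> A \<Longrightarrow> (f y, eta) \<in> R \<Longrightarrow> f y \<noteq> eta \<Longrightarrow> (y, eta) \<in> r"
    and R_r: "\<And>y eta. eta \<in> A \<Longrightarrow> (y, eta) \<in> r \<Longrightarrow> (f y, eta) \<in> R"
    using Well_order_along_retraction[OF R(1)] R(2) by metis
  show ?thesis
  proof (rule that[OF r])
    show "(x, eta) \<in> r \<and> x \<noteq> eta" if eta: "eta \<in> A" and x: "x \<in> G eta" for eta x
    proof (cases "x \<in> A")
      case True
      then show ?thesis using G[OF eta] r_R[of x eta] x eta unfolding f_def by auto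
    next
      case False
      then have "x \<in> ?B - A" using x eta by auto
      then have "(f x, eta) \<in> R" using user_least eta x False unfolding f_def by auto
      then show ?thesis using r_last[of x] r_R[of x eta] x eta False by (cases "f x = eta") auto
    qed
    show "(y, eta) \<in> R" if "eta \<in> A" "(y, eta) \<in> r" "y \<in> A" for eta y
      using R_r[OF that(1,2)] that(3) unfolding f_def by simp
    show "\<exists>w \<in> A. y \<in> G w \<and> (w, eta) \<in> R" if "eta \<in> A" "(y, eta) \<in> r" "y \<notin> A" for eta y
    proof -
      have "y \<in> ?B" using that(2) r(2) by (auto intro: FieldI1)
      then show ?thesis using user[of y] R_r[OF that(1,2)] that(3) unfolding f_def by auto
    qed
  qed
qed

section \<open>Cardinal bounds\<close>

lemma countable_card_of_ordLeq_infinite: "countable A \<Longrightarrow> \<not> finite B \<Longrightarrow> |A| \<le>o |B|"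
  using countable_card_le_natLeq[of A] infinite_iff_natLeq_ordLeq[of B] ordLeq_transitive by blast

lemma card_of_Un_ordLeq_infinite:
  "\<not> finite B \<Longrightarrow> |A1| \<le>o |B| \<Longrightarrow> |A2| \<le>o |B| \<Longrightarrow> |A1 \<union> A2| \<le>o |B|"
  using card_of_Un_ordLeq_infinite_Field[of "|B|" A1 A2] card_of_card_order_on[of B]
  by (simp add: Field_card_of)

lemma card_of_lists_length_ordLeq_infinite:
  assumes B: "\<not> finite B" and C: "|C| \<le>o |B|"
  shows "|{xs. length xs = m \<and> set xs \<subseteq> C}| \<le>o |B|"
proof (induction m)
  case 0
  have "{xs. length xs = 0 \<and> set xs \<subseteq> C} = {[]}" by auto
  then show ?case using countable_card_of_ordLeq_infinite[OF _ B, of "{[]}"] by simp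
next
  case (Suc m)
  let ?T = "C \<times> {xs. length xs = m \<and> set xs \<subseteq> C}"
  have "{xs. length xs = Suc m \<and> set xs \<subseteq> C} \<subseteq> (\<lambda>(x, xs). x # xs) ` ?T"
  proof
    fix xs assume xs: "xs \<in> {xs. length xs = Suc m \<and> set xs \<subseteq> C}"
    then obtain x ys where "xs = x # ys" by (cases xs) auto
    with xs show "xs \<in> (\<lambda>(x, xs). x # xs) ` ?T" by force
  qed
  then have "|{xs. length xs = Suc m \<and> set xs \<subseteq> C}| \<le>o |(\<lambda>(x, xs). x # xs) ` ?T|"
    by (rule card_of_mono1)
  moreover have "|(\<lambda>(x, xs). x # xs) ` ?T| \<le>o |?T|" by (rule card_of_image)
  moreover have "|?T| \<le>o |B|"
    using card_of_Times_ordLeq_infinite_Field[of "|B|" C] card_of_card_order_on[of B] B C Suc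
    by (simp add: Field_card_of)
  ultimately show ?case using ordLeq_transitive by meson
qed

lemma le_aleph_mono:
  fixes A A' :: "'x set"
  assumes "le_aleph j A" "|A'| \<le>o |A|"
  shows "le_aleph j A'"
proof (cases j)
  case 0
  then show ?thesis using assms ordLeq_transitive by auto
next
  case (Suc i)
  then show ?thesis using assms by simp (meson ordLeq_transitive)
qed

lemma le_aleph_subset: "le_aleph j (A :: 'x set) \<Longrightarrow> A' \<subseteq> A \<Longrightarrow> le_aleph j A'"
  using le_aleph_mono card_of_mono1 by blast

lemma le_aleph_0_iff: "le_aleph 0 A \<longleftrightarrow> countable A"
  by (metis countable_card_le_natLeq le_aleph.simps(1))

lemma countable_le_aleph: "countable A \<Longrightarrow> le_aleph j A"
proof (induction j)
  case 0
  then show ?case using le_aleph_0_iff by blast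
next
  case (Suc j)
  have "|A| \<le>o cardSuc |A|"
    using cardSuc_greater[OF card_of_Card_order] ordLess_imp_ordLeq by blast
  then show ?case using Suc by auto
qed

lemma le_aleph_insert:
  assumes "le_aleph j A"
  shows "le_aleph j (insert a A)"
proof (cases "finite A")
  case True
  then show ?thesis by (simp add: countable_finite countable_le_aleph)
next
  case False
  have "|{a}| \<le>o |A|" by (rule countable_card_of_ordLeq_infinite[OF _ False]) simp
  moreover have "|A| \<le>o |A|" by (rule ordLeq_reflexive[OF card_of_Well_order])
  ultimately have "|{a} \<union> A| \<le>o |A|" by (rule card_of_Un_ordLeq_infinite[OF False])
  then have "|insert a A| \<le>o |A|" by simp
  then show ?thesis using le_aleph_mono assms by blast
qed

lemma le_aleph_Suc_under:
  fixes X :: "'x set"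
  assumes X: "le_aleph (Suc j) X" and a: "a \<in> X"
  shows "le_aleph j (under |X| a)"
proof -
  obtain B :: "'x set" where B: "le_aleph j B" and XB: "|X| \<le>o cardSuc |B|" using X by auto
  define U where "U = underS |X| a"
  have "|U| <o |X|"
    unfolding U_def using card_of_underS[OF card_of_Card_order] a by (simp add: Field_card_of)
  then have "|U| <o cardSuc |B|" using XB ordLess_ordLeq_trans by blast
  then have "\<not> |B| <o |U|"
    using cardSuc_ordLess_ordLeq[OF card_of_Card_order card_of_Card_order] not_ordLess_ordLeq
    by blast
  then have "|U| \<le>o |B|"
    using not_ordLess_iff_ordLeq[OF card_of_Well_order card_of_Well_order] by blast
  then have "le_aleph j U" using B le_aleph_mono by blast
  then have "le_aleph j (insert a U)" by (rule le_aleph_insert)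
  moreover have "under |X| a \<subseteq> insert a U"
    unfolding U_def under_def underS_def by auto
  ultimately show ?thesis by (rule le_aleph_subset)
qed

section \<open>Free orders of countable sets\<close>

lemma nth_restr_other: "l' \<noteq> l \<Longrightarrow> restr eta l n ! l' = eta ! l'"
  unfolding restr_def by simp

lemma eventually_notin_finite: "finite (A :: nat set) \<Longrightarrow> \<forall>\<^sub>F n in sequentially. n \<notin> A"
  by (simp add: cofinite_eq_sequentially[symmetric] eventually_cofinite)

lemma finite_inj_on_le_nat:
  assumes "inj_on e X"
  shows "finite {x \<in> X. e x \<le> (c :: nat)}"
proof -
  have "inj_on e {x \<in> X. e x \<le> c}" using assms by (rule inj_on_subset) auto
  moreover have "e ` {x \<in> X. e x \<le> c} \<subseteq> {..c}" by auto
  ultimately show ?thesis by (meson finite_atMost finite_imageD finite_subset)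
qed

locale regressive_function =
  fixes k :: nat and S :: "'a::{wellorder, complete_linorder} set"
    and Lam :: "'a seq list set" and F :: "'a seq list \<Rightarrow> 'a seq list set"
  assumes comb_param: "comb_param k S Lam" and regressive: "regressive k Lam F"
begin

definition sup_coord :: "'a seq list \<Rightarrow> nat \<Rightarrow> 'a" where
  "sup_coord eta l = Sup (rng (eta ! l))"

definition sup_F :: "'a seq list \<Rightarrow> nat \<Rightarrow> 'a" where
  "sup_F eta l = Sup (\<Union>nu \<in> F eta. rng (nu ! l))"

lemma length_Lam: "eta \<in> Lam \<Longrightarrow> length eta = Suc k"
  using comb_param unfolding comb_param_def by auto

lemma nth_Lam_Inr:
  assumes "eta \<in> Lam" "l \<le> k"
  obtains f where "eta ! l = Inr f"
  using assms comb_param unfolding comb_param_def by blast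

lemma countable_F: "eta \<in> Lam \<Longrightarrow> countable (F eta)"
  using regressive unfolding regressive_def by auto

lemma sup_F_less: "eta \<in> Lam \<Longrightarrow> l \<le> k \<Longrightarrow> sup_F eta l < sup_coord eta l"
  using regressive unfolding regressive_def sup_F_def sup_coord_def by auto

lemma sup_coord_le_sup_F: "nu \<in> F eta \<Longrightarrow> sup_coord nu l \<le> sup_F eta l"
  unfolding sup_coord_def sup_F_def by (meson Sup_subset_mono UN_upper)

lemma sup_coord_F_less: "eta \<in> Lam \<Longrightarrow> nu \<in> F eta \<Longrightarrow> l \<le> k \<Longrightarrow> sup_coord nu l < sup_coord eta l"
  using sup_coord_le_sup_F sup_F_less order_le_less_trans by blast

lemma nth_restr_Lam:
  "eta \<in> Lam \<Longrightarrow> l \<le> k \<Longrightarrow> eta ! l = Inr f \<Longrightarrow> restr eta l n ! l = Inl (map f [0..<n])"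
  by (simp add: restr_def length_Lam)

lemma restr_notin_Lam:
  assumes eta: "eta \<in> Lam" and l: "l \<le> k"
  shows "restr eta l n \<notin> Lam"
proof
  assume "restr eta l n \<in> Lam"
  then obtain g where "restr eta l n ! l = Inr g" using nth_Lam_Inr l by blast
  moreover obtain f where "eta ! l = Inr f" using nth_Lam_Inr eta l .
  ultimately show False using nth_restr_Lam[OF eta l] by simp
qed

lemma inj_restr:
  assumes eta: "eta \<in> Lam" and l: "l \<le> k"
  shows "inj (restr eta l)"
proof (rule injI)
  fix n m assume "restr eta l n = restr eta l m"
  then have "restr eta l n ! l = restr eta l m ! l" by simp
  moreover obtain f where "eta ! l = Inr f" using nth_Lam_Inr eta l .
  ultimately have "length (map f [0..<n]) = length (map f [0..<m])"
    using nth_restr_Lam[OF eta l] by simp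
  then show "n = m" by simp
qed

lemma eq_if_restr_eq:
  assumes "restr nu l n = restr eta l n" "length nu = length eta" "nu ! l = eta ! l"
  shows "nu = eta"
proof (rule nth_equalityI)
  fix i assume "i < length nu"
  show "nu ! i = eta ! i"
  proof (cases "i = l")
    case False
    then show ?thesis using assms(1) by (metis nth_restr_other)
  qed (use assms(3) in simp)
qed (use assms in simp)

lemma finite_restr_eq:
  assumes nu: "nu \<in> Lam" and eta: "eta \<in> Lam" and "nu \<noteq> eta" and l: "l \<le> k"
  shows "finite {n. restr nu l n = restr eta l n}"
proof (cases "nu ! l = eta ! l")
  case True
  have "restr nu l n \<noteq> restr eta l n" for n
    using eq_if_restr_eq[of nu l n eta] True length_Lam nu eta \<open>nu \<noteq> eta\<close> by auto
  then have "{n. restr nu l n = restr eta l n} = {}" by auto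
  then show ?thesis by simp
next
  case False
  obtain f g where f: "nu ! l = Inr f" and g: "eta ! l = Inr g"
    using nth_Lam_Inr nu eta l by metis
  then obtain i where i: "f i \<noteq> g i" using False by auto
  have "{n. restr nu l n = restr eta l n} \<subseteq> {..i}"
  proof
    fix n assume "n \<in> {n. restr nu l n = restr eta l n}"
    then have "restr nu l n ! l = restr eta l n ! l" by simp
    then have "map f [0..<n] = map g [0..<n]"
      using nth_restr_Lam[OF nu l f] nth_restr_Lam[OF eta l g] by simp
    then show "n \<in> {..i}" using i by (auto simp: not_le)
  qed
  then show ?thesis using finite_subset by blast
qed

lemma first_eq_if_restr_eq:
  assumes nu: "nu \<in> Lam" and eta: "eta \<in> Lam" and l': "l' \<le> k" and "0 < n"
    and eq: "restr nu l n = restr eta l n"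
  shows "first (nu ! l') = first (eta ! l')"
proof (cases "l' = l")
  case True
  obtain f where f: "nu ! l = Inr f" using nth_Lam_Inr nu l' True by blast
  obtain g where g: "eta ! l = Inr g" using nth_Lam_Inr eta l' True by blast
  have "restr nu l n ! l = restr eta l n ! l" using eq by simp
  then have "map f [0..<n] = map g [0..<n]"
    using nth_restr_Lam[OF nu _ f] nth_restr_Lam[OF eta _ g] l' True by simp
  then have "f 0 = g 0" using \<open>0 < n\<close> by (simp add: map_eq_conv)
  then show ?thesis using f g True by simp
next
  case False
  then have "restr nu l n ! l' = nu ! l'" "restr eta l n ! l' = eta ! l'"
    by (simp_all add: nth_restr_other)
  then show ?thesis using eq by simp
qed

lemma eventually_sup_F_less_restr:
  assumes eta: "eta \<in> Lam" and l: "l \<le> k" and l': "l' \<le> k"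
  shows "\<forall>\<^sub>F n in sequentially. sup_F eta l' < sup_coord (restr eta l n) l'"
proof (cases "l' = l")
  case True
  obtain g where g: "eta ! l = Inr g" using nth_Lam_Inr eta l .
  have "sup_F eta l < Sup (range g)"
    using sup_F_less[OF eta l] g unfolding sup_coord_def by simp
  then obtain i where i: "sup_F eta l < g i" by (auto simp: less_Sup_iff)
  have less: "sup_F eta l < sup_coord (restr eta l n) l" if "n > i" for n
  proof -
    have "g i \<in> rng (restr eta l n ! l)" using nth_restr_Lam[OF eta l g] that by simp
    then show ?thesis using i unfolding sup_coord_def by (meson Sup_upper less_le_trans)
  qed
  have "\<forall>\<^sub>F n in sequentially. n > i" by (rule eventually_gt_at_top)
  then show ?thesis unfolding True by (rule eventually_mono) (rule less)
next
  case False
  then show ?thesis using sup_F_less[OF eta l'] by (simp add: sup_coord_def nth_restr_other)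
qed

definition separated_at :: "'a seq list rel \<Rightarrow> 'a seq list set \<Rightarrow> 'a seq list \<Rightarrow> nat \<Rightarrow> bool" where
  "separated_at R X eta l \<longleftrightarrow> (\<forall>\<^sub>F n in sequentially. \<forall>nu \<in> X. (nu, eta) \<in> R \<longrightarrow>
     (nu \<noteq> eta \<longrightarrow> restr nu l n \<noteq> restr eta l n) \<and> restr eta l n \<notin> F nu)"

definition free_order :: "'a seq list set \<Rightarrow> ('a seq list \<Rightarrow> nat set) \<Rightarrow> 'a seq list rel \<Rightarrow> bool" where
  "free_order X L R \<longleftrightarrow> Well_order R \<and> Field R = X \<and>
     (\<forall>eta \<in> X. \<forall>nu \<in> F eta \<inter> X. (nu, eta) \<in> R \<and> nu \<noteq> eta) \<and>
     (\<forall>eta \<in> X. \<exists>l \<in> L eta. separated_at R X eta l)"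

lemma separated_at_if_finite_predecessors:
  assumes fin: "finitary Lam F" and X: "X \<subseteq> Lam" and eta: "eta \<in> X" and l: "l \<le> k"
    and P: "finite {nu \<in> X. (nu, eta) \<in> R}"
  shows "separated_at R X eta l"
proof -
  let ?P = "{nu \<in> X. (nu, eta) \<in> R}"
  let ?Bad = "(\<Union>nu \<in> ?P - {eta}. {n. restr nu l n = restr eta l n}) \<union> restr eta l -` \<Union>(F ` ?P)"
  have "finite (\<Union>nu \<in> ?P - {eta}. {n. restr nu l n = restr eta l n})"
    using P finite_restr_eq X eta l by blast
  moreover have "finite (\<Union>(F ` ?P))" using P fin X unfolding finitary_def by blast
  then have "finite (restr eta l -` \<Union>(F ` ?P))"
    using finite_vimageI inj_restr X eta l by blast
  ultimately have "\<forall>\<^sub>F n in sequentially. n \<notin> ?Bad"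
    by (intro eventually_notin_finite finite_UnI)
  then show ?thesis
    unfolding separated_at_def by (rule eventually_mono) blast
qed

lemma free_order_key_order:
  assumes inj: "inj_on key X"
    and parents: "\<And>eta nu. eta \<in> X \<Longrightarrow> nu \<in> F eta \<inter> X \<Longrightarrow> key nu < key eta"
    and separated: "\<And>eta. eta \<in> X \<Longrightarrow> \<exists>l \<in> L eta. separated_at (key_order key X) X eta l"
  shows "free_order X L (key_order key X)"
  unfolding free_order_def
  using Well_order_key_order[OF inj] parents separated
  by (auto simp: key_order_def dest: less_imp_le)

lemma finitary_ancestor_bound:
  fixes e :: "'a seq list \<Rightarrow> nat"
  assumes fin: "finitary Lam F" and X: "X \<subseteq> Lam"
  obtains h :: "'a seq list \<Rightarrow> nat" where "\<And>eta. e eta \<le> h eta"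
    and "\<And>eta nu. eta \<in> X \<Longrightarrow> nu \<in> F eta \<inter> X \<Longrightarrow> h nu \<le> h eta"
proof -
  define E where "E = {(nu, eta). eta \<in> X \<and> nu \<in> F eta \<inter> X}"
  define anc where "anc eta = {nu. (nu, eta) \<in> E\<^sup>*}" for eta
  have "wf E"
  proof (rule wf_subset)
    show "wf (inv_image {(a, b). a < b} (\<lambda>eta. sup_coord eta 0))" by (rule wf_inv_image[OF wf])
    show "E \<subseteq> inv_image {(a, b). a < b} (\<lambda>eta. sup_coord eta 0)"
      using sup_coord_F_less X unfolding E_def by auto
  qed
  have anc_finite: "finite (anc eta)" for eta
  proof (induction eta rule: wf_induct_rule[OF \<open>wf E\<close>])
    case (1 eta)
    have "anc eta \<subseteq> insert eta (\<Union>nu \<in> {nu. (nu, eta) \<in> E}. anc nu)"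
      unfolding anc_def by (auto elim: rtranclE)
    moreover have "finite {nu. (nu, eta) \<in> E}"
      using fin X unfolding E_def finitary_def by (cases "eta \<in> X") auto
    ultimately show ?case using 1 by (simp add: finite_subset)
  qed
  define h where "h eta = Max (e ` anc eta)" for eta
  show thesis
  proof (rule that)
    show "e eta \<le> h eta" for eta
      unfolding h_def using anc_finite[of eta] unfolding anc_def by simp
    show "h nu \<le> h eta" if "eta \<in> X" "nu \<in> F eta \<inter> X" for eta nu
    proof -
      have "(nu, eta) \<in> E" using that unfolding E_def by auto
      then have "anc nu \<subseteq> anc eta" unfolding anc_def by (auto intro: rtrancl_into_rtrancl)
      then show ?thesis
        unfolding h_def using anc_finite[of eta] by (intro Max_mono) (auto simp: anc_def)
    qed
  qed
qed

lemma free_order_countable_finitary: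
  assumes fin: "finitary Lam F" and X: "X \<subseteq> Lam" "countable X"
    and L: "\<And>eta. eta \<in> X \<Longrightarrow> L eta \<subseteq> {..k} \<and> L eta \<noteq> {}"
  shows "\<exists>R. free_order X L R"
proof -
  obtain e :: "_ \<Rightarrow> nat" where e: "inj_on e X" using X(2) by (auto simp: countable_def)
  obtain h where e_le_h: "\<And>eta. e eta \<le> h eta"
    and h_mono: "\<And>eta nu. eta \<in> X \<Longrightarrow> nu \<in> F eta \<inter> X \<Longrightarrow> h nu \<le> h eta"
    using finitary_ancestor_bound[OF fin X(1)] by blast
  define key where "key eta = (h eta, sup_coord eta 0, e eta)" for eta
  have inj: "inj_on key X" using e unfolding key_def inj_on_def by auto
  have parents: "key nu < key eta" if "eta \<in> X" "nu \<in> F eta \<inter> X" for eta nu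
    using h_mono[OF that] sup_coord_F_less[of eta nu 0] that X(1)
    unfolding key_def by (auto simp: less_prod_def)
  have "\<exists>l \<in> L eta. separated_at (key_order key X) X eta l" if eta: "eta \<in> X" for eta
  proof -
    obtain l where l: "l \<in> L eta" using L[OF eta] by blast
    have "{nu \<in> X. (nu, eta) \<in> key_order key X} \<subseteq> {nu \<in> X. e nu \<le> h eta}"
      using e_le_h unfolding key_order_def key_def
      by (auto simp: less_eq_prod_def intro: order_trans less_imp_le)
    then have "finite {nu \<in> X. (nu, eta) \<in> key_order key X}"
      using finite_inj_on_le_nat[OF e] finite_subset by blast
    then show ?thesis
      using separated_at_if_finite_predecessors[OF fin X(1) eta] l L[OF eta] by blast
  qed
  then show ?thesis using free_order_key_order[OF inj parents] by blast
qed

lemma separated_at_simple: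
  assumes sim: "simple k Lam F" and X: "X \<subseteq> Lam" and e: "inj_on (e :: _ \<Rightarrow> nat) X"
    and eta: "eta \<in> X" and l: "l \<le> k"
  shows "separated_at (key_order (\<lambda>eta. (sup_F eta k, e eta)) X) X eta l"
proof -
  let ?R = "key_order (\<lambda>eta. (sup_F eta k, e eta)) X"
  let ?P = "{nu \<in> X. e nu \<le> e eta} - {eta}"
  have etaL: "eta \<in> Lam" using eta X by auto
  have "finite ?P" using finite_inj_on_le_nat[OF e] by simp
  then have "finite (\<Union>nu \<in> ?P. {n. restr nu l n = restr eta l n})"
    using finite_restr_eq X etaL l by (intro finite_UN_I) auto
  then have "\<forall>\<^sub>F n in sequentially. n \<notin> (\<Union>nu \<in> ?P. {n. restr nu l n = restr eta l n})"
    by (rule eventually_notin_finite)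
  moreover have "\<forall>\<^sub>F n in sequentially. sup_F eta k < sup_coord (restr eta l n) k"
    using eventually_sup_F_less_restr etaL l by blast
  moreover have "\<forall>\<^sub>F n in sequentially. 0 < n" by (rule eventually_gt_at_top)
  ultimately show ?thesis
    unfolding separated_at_def
  proof eventually_elim
    case (elim n)
    show ?case
    proof (intro ballI impI)
      fix nu assume nu: "nu \<in> X" "(nu, eta) \<in> ?R"
      then have sup_F_le: "sup_F nu k \<le> sup_F eta k"
        unfolding key_order_def by (auto simp: less_eq_prod_def)
      have "restr nu l n \<noteq> restr eta l n" if "nu \<noteq> eta"
      proof
        assume eq: "restr nu l n = restr eta l n"
        have "first (nu ! k) = first (eta ! k)"
          using first_eq_if_restr_eq[OF _ etaL _ _ eq] nu X elim by auto
        then have "F nu = F eta" using sim nu X etaL unfolding simple_def by blast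
        then have "e nu \<le> e eta" using nu unfolding key_order_def sup_F_def
          by (auto simp: less_eq_prod_def)
        then show False using elim nu that eq by blast
      qed
      moreover have "restr eta l n \<notin> F nu"
      proof
        assume "restr eta l n \<in> F nu"
        then have "sup_coord (restr eta l n) k \<le> sup_F eta k"
          using sup_coord_le_sup_F sup_F_le order_trans by blast
        then show False using elim by simp
      qed
      ultimately show "(nu \<noteq> eta \<longrightarrow> restr nu l n \<noteq> restr eta l n) \<and> restr eta l n \<notin> F nu"
        by blast
    qed
  qed
qed

lemma free_order_countable_simple:
  assumes sim: "simple k Lam F" and X: "X \<subseteq> Lam" "countable X"
    and L: "\<And>eta. eta \<in> X \<Longrightarrow> L eta \<subseteq> {..k} \<and> L eta \<noteq> {}"
  shows "\<exists>R. free_order X L R"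
proof -
  obtain e :: "_ \<Rightarrow> nat" where e: "inj_on e X" using X(2) by (auto simp: countable_def)
  define key where "key eta = (sup_F eta k, e eta)" for eta
  have inj: "inj_on key X" using e unfolding key_def inj_on_def by auto
  have parents: "key nu < key eta" if "eta \<in> X" "nu \<in> F eta \<inter> X" for eta nu
  proof -
    have "sup_F nu k < sup_coord nu k" using sup_F_less that X(1) by auto
    also have "\<dots> \<le> sup_F eta k" using sup_coord_le_sup_F that by auto
    finally show ?thesis unfolding key_def by (simp add: less_prod_def)
  qed
  have "\<exists>l \<in> L eta. separated_at (key_order key X) X eta l" if "eta \<in> X" for eta
  proof -
    obtain l where "l \<in> L eta" "l \<le> k" using L[OF \<open>eta \<in> X\<close>] by blast
    then show ?thesis
      using separated_at_simple[OF sim X(1) e \<open>eta \<in> X\<close>] unfolding key_def by blast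
  qed
  then show ?thesis using free_order_key_order[OF inj parents] by blast
qed

end

section \<open>Closure under parents and coordinates\<close>

context regressive_function
begin

definition coords :: "'a seq list set \<Rightarrow> nat \<Rightarrow> 'a seq set" where
  "coords Z l = (\<lambda>nu. nu ! l) ` (Z \<union> \<Union>(F ` Z))"

definition closed_in :: "'a seq list set \<Rightarrow> 'a seq list set \<Rightarrow> bool" where
  "closed_in X Z \<longleftrightarrow> Z \<subseteq> X \<and> (\<forall>nu \<in> Z. F nu \<inter> X \<subseteq> Z) \<and>
     (\<forall>eta \<in> X. (\<forall>l \<le> k. eta ! l \<in> coords Z l) \<longrightarrow> eta \<in> Z)"

definition closure_step :: "'a seq list set \<Rightarrow> 'a seq list set \<Rightarrow> 'a seq list set" where
  "closure_step X Z = Z \<union> (\<Union>(F ` Z) \<inter> X) \<union> {eta \<in> X. \<forall>l \<le> k. eta ! l \<in> coords Z l}"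

definition closure_in :: "'a seq list set \<Rightarrow> 'a seq list set \<Rightarrow> 'a seq list set" where
  "closure_in X Y = (\<Union>n. (closure_step X ^^ n) Y)"

lemma coords_mono: "Z \<subseteq> Z' \<Longrightarrow> coords Z l \<subseteq> coords Z' l"
  unfolding coords_def by blast

lemma coords_UN: "coords (\<Union>n. Z n) l = (\<Union>n. coords (Z n) l)"
  unfolding coords_def by auto

lemma coords_singleton: "x \<in> coords Z l \<Longrightarrow> \<exists>nu \<in> Z. x \<in> coords {nu} l"
  unfolding coords_def by blast

lemma mono_closure_step: "mono (closure_step X)"
proof (rule monoI)
  fix Z Z' :: "'a seq list set" assume "Z \<subseteq> Z'"
  then show "closure_step X Z \<subseteq> closure_step X Z'"
    using coords_mono[of Z Z'] unfolding closure_step_def by blast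
qed

lemma closure_step_subset: "Z \<subseteq> X \<Longrightarrow> closure_step X Z \<subseteq> X"
  unfolding closure_step_def by blast

lemma closure_step_le_funpow:
  "i \<le> j \<Longrightarrow> (closure_step X ^^ i) Y \<subseteq> (closure_step X ^^ j) Y"
  by (rule funpow_mono2[OF mono_closure_step]) (auto simp: closure_step_def)

lemma funpow_closure_step_subset: "Y \<subseteq> X \<Longrightarrow> (closure_step X ^^ n) Y \<subseteq> X"
  by (induction n) (simp_all add: closure_step_subset)

lemma subset_closure_in: "Y \<subseteq> closure_in X Y"
  unfolding closure_in_def using UN_upper[of 0 UNIV "\<lambda>n. (closure_step X ^^ n) Y"] by simp

lemma closure_in_mono: "Y \<subseteq> Y' \<Longrightarrow> closure_in X Y \<subseteq> closure_in X Y'"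
  unfolding closure_in_def by (intro UN_mono order_refl funpow_mono[OF mono_closure_step])

lemma closed_in_closure_in:
  assumes "Y \<subseteq> X"
  shows "closed_in X (closure_in X Y)"
  unfolding closed_in_def
proof (intro conjI ballI impI)
  let ?Z = "\<lambda>n. (closure_step X ^^ n) Y"
  show "closure_in X Y \<subseteq> X"
    unfolding closure_in_def using funpow_closure_step_subset[OF assms] by blast
  show "F nu \<inter> X \<subseteq> closure_in X Y" if nu: "nu \<in> closure_in X Y" for nu
  proof -
    obtain n where "nu \<in> ?Z n" using nu unfolding closure_in_def by blast
    then have "F nu \<inter> X \<subseteq> ?Z (Suc n)" unfolding closure_step_def by auto
    then show ?thesis unfolding closure_in_def by blast
  qed
  fix eta assume eta: "eta \<in> X" and coords: "\<forall>l \<le> k. eta ! l \<in> coords (closure_in X Y) l"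
  have "\<forall>l \<in> {..k}. \<exists>n. eta ! l \<in> coords (?Z n) l"
    using coords unfolding closure_in_def coords_UN by simp
  from bchoice[OF this] obtain m where m: "\<forall>l \<in> {..k}. eta ! l \<in> coords (?Z (m l)) l" ..
  define N where "N = Max (m ` {..k})"
  have "eta ! l \<in> coords (?Z N) l" if l: "l \<le> k" for l
  proof -
    have "m l \<le> N" unfolding N_def using l by (intro Max_ge) auto
    then have "coords (?Z (m l)) l \<subseteq> coords (?Z N) l"
      by (intro coords_mono closure_step_le_funpow)
    then show ?thesis using m l by auto
  qed
  then have "eta \<in> ?Z (Suc N)" using eta unfolding closure_step_def by auto
  then show "eta \<in> closure_in X Y" unfolding closure_in_def by blast
qed

lemma card_of_closure_step:
  assumes X: "X \<subseteq> Lam" and Z: "Z \<subseteq> Lam" and B: "\<not> finite B" and ZB: "|Z| \<le>o |B|"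
  shows "|closure_step X Z| \<le>o |B|"
proof -
  let ?G = "Z \<union> \<Union>(F ` Z)"
  let ?C = "\<Union>l \<le> k. coords Z l"
  have "\<forall>nu \<in> Z. |F nu| \<le>o |B|"
    using countable_card_of_ordLeq_infinite[OF countable_F B] Z by blast
  then have "|\<Union>(F ` Z)| \<le>o |B|" by (rule card_of_UNION_ordLeq_infinite[OF B ZB])
  then have G: "|?G| \<le>o |B|" by (rule card_of_Un_ordLeq_infinite[OF B ZB])
  have "\<forall>l \<in> {..k}. |coords Z l| \<le>o |B|"
    unfolding coords_def using card_of_image ordLeq_transitive G by blast
  moreover have "|{..k}| \<le>o |B|" by (rule countable_card_of_ordLeq_infinite[OF _ B]) simp
  ultimately have C: "|?C| \<le>o |B|"
    using card_of_UNION_ordLeq_infinite[OF B] by blast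
  have "{eta \<in> X. \<forall>l \<le> k. eta ! l \<in> coords Z l} \<subseteq> {xs. length xs = Suc k \<and> set xs \<subseteq> ?C}"
  proof safe
    fix eta assume "eta \<in> X" and coords: "\<forall>l \<le> k. eta ! l \<in> coords Z l"
    then show len: "length eta = Suc k" using X length_Lam by blast
    fix x assume "x \<in> set eta"
    then obtain l where "l < Suc k" "x = eta ! l" using len by (metis in_set_conv_nth)
    then show "x \<in> ?C" using coords by (auto simp: less_Suc_eq_le)
  qed
  then have "closure_step X Z \<subseteq> ?G \<union> {xs. length xs = Suc k \<and> set xs \<subseteq> ?C}"
    unfolding closure_step_def by blast
  moreover have "|?G \<union> {xs. length xs = Suc k \<and> set xs \<subseteq> ?C}| \<le>o |B|"
    using card_of_Un_ordLeq_infinite[OF B G card_of_lists_length_ordLeq_infinite[OF B C]] .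
  ultimately show ?thesis using card_of_mono1 ordLeq_transitive by blast
qed

lemma card_of_closure_in:
  assumes X: "X \<subseteq> Lam" and Y: "Y \<subseteq> X" and B: "\<not> finite B" and YB: "|Y| \<le>o |B|"
  shows "|closure_in X Y| \<le>o |B|"
proof -
  have "\<forall>n \<in> UNIV. |(closure_step X ^^ n) Y| \<le>o |B|"
  proof
    fix n show "|(closure_step X ^^ n) Y| \<le>o |B|"
    proof (induction n)
      case 0
      show ?case using YB by simp
    next
      case (Suc n)
      have "(closure_step X ^^ n) Y \<subseteq> Lam" using funpow_closure_step_subset[OF Y] X by blast
      then show ?case using card_of_closure_step[OF X _ B Suc.IH] by simp
    qed
  qed
  moreover have "|UNIV :: nat set| \<le>o |B|" by (rule countable_card_of_ordLeq_infinite[OF _ B]) simp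
  ultimately show ?thesis
    unfolding closure_in_def by (rule card_of_UNION_ordLeq_infinite[OF B, rotated])
qed

lemma le_aleph_closure_in:
  assumes X: "X \<subseteq> Lam" and Y: "Y \<subseteq> X" and le: "le_aleph j Y"
  shows "le_aleph j (closure_in X Y)"
proof (cases "finite Y")
  case True
  then have "|Y| \<le>o |UNIV :: nat set|"
    by (intro countable_card_of_ordLeq_infinite countable_finite) simp_all
  then have "|closure_in X Y| \<le>o |UNIV :: nat set|"
    by (rule card_of_closure_in[OF X Y infinite_UNIV_nat])
  then have "countable (closure_in X Y)" by (simp add: countable_card_of_nat)
  then show ?thesis by (rule countable_le_aleph)
next
  case False
  have "|closure_in X Y| \<le>o |Y|"
    by (rule card_of_closure_in[OF X Y False ordLeq_reflexive[OF card_of_Well_order]])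
  then show ?thesis using le_aleph_mono le by blast
qed

end

section \<open>Free orders of larger sets\<close>

locale layered_family = regressive_function +
  fixes X :: "'a seq list set" and W :: "'a seq list rel"
  assumes W: "Well_order W" and Field_W: "Field W = X"
begin

definition stage :: "'a seq list \<Rightarrow> 'a seq list set" where
  "stage a = closure_in X (under W a)"

definition rank :: "'a seq list \<Rightarrow> 'a seq list" where
  "rank eta = wo_rel.minim W {a \<in> X. eta \<in> stage a}"

definition layer :: "'a seq list \<Rightarrow> 'a seq list set" where
  "layer a = {eta \<in> X. rank eta = a}"

definition below :: "'a seq list \<Rightarrow> 'a seq list set" where
  "below a = {nu \<in> X. rank nu \<in> underS W a}"

lemma W_lin: "refl_on X W" "trans W" "antisym W"
  using Well_order_lin[OF W] Field_W by simp_all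

lemma under_subset: "under W a \<subseteq> X"
  using Field_W unfolding under_def by (auto intro: FieldI1)

lemma closed_stage: "closed_in X (stage a)"
  unfolding stage_def by (rule closed_in_closure_in[OF under_subset])

lemma stage_mono: "(a, b) \<in> W \<Longrightarrow> stage a \<subseteq> stage b"
  unfolding stage_def using W_lin(2)
  by (intro closure_in_mono) (auto simp: under_def dest: transD)

lemma mem_stage_self:
  assumes "a \<in> X"
  shows "a \<in> stage a"
proof -
  have "a \<in> under W a" using W_lin(1) assms unfolding under_def refl_on_def by auto
  then show ?thesis using subset_closure_in unfolding stage_def by blast
qed

lemma rank:
  assumes "eta \<in> X"
  shows "rank eta \<in> X" and "eta \<in> stage (rank eta)"
proof -
  have "{a \<in> X. eta \<in> stage a} \<subseteq> Field W" "{a \<in> X. eta \<in> stage a} \<noteq> {}"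
    using Field_W mem_stage_self assms by auto
  then have "rank eta \<in> {a \<in> X. eta \<in> stage a}"
    unfolding rank_def using wo_rel.minim_in W unfolding wo_rel_def by blast
  then show "rank eta \<in> X" and "eta \<in> stage (rank eta)" by auto
qed

lemma rank_least:
  assumes "b \<in> X" "eta \<in> stage b"
  shows "(rank eta, b) \<in> W"
proof -
  have "{a \<in> X. eta \<in> stage a} \<subseteq> Field W" using Field_W by auto
  then show ?thesis
    unfolding rank_def using wo_rel.minim_least[of W _ b] W assms unfolding wo_rel_def by auto
qed

lemma rank_parent:
  assumes eta: "eta \<in> X" and nu: "nu \<in> F eta \<inter> X"
  shows "(rank nu, rank eta) \<in> W"
proof -
  have "nu \<in> stage (rank eta)" using closed_stage rank[OF eta] nu unfolding closed_in_def by blast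
  then show ?thesis using rank_least rank(1)[OF eta] by blast
qed

text \<open>The set of elements of earlier layers is a union of a chain of closed sets,
  so it is closed under the finitary operation of forming tuples of coordinates.\<close>

lemma mem_below_if_coords:
  assumes eta: "eta \<in> X" and coords: "\<forall>l \<le> k. eta ! l \<in> coords (below a) l"
  shows "eta \<in> below a"
proof -
  have "\<forall>l \<in> {..k}. \<exists>nu. nu \<in> below a \<and> eta ! l \<in> coords {nu} l"
    using coords coords_singleton by blast
  from bchoice[OF this] obtain g where g: "\<forall>l \<in> {..k}. g l \<in> below a \<and> eta ! l \<in> coords {g l} l" ..
  have g_X: "g l \<in> X" and rank_g: "rank (g l) \<in> underS W a" if "l \<le> k" for l
    using g that unfolding below_def by auto
  have "finite (rank ` g ` {..k})" "rank ` g ` {..k} \<noteq> {}" "rank ` g ` {..k} \<subseteq> Field W"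
    using g_X rank(1) Field_W by auto
  then obtain b where b: "b \<in> rank ` g ` {..k}" "\<forall>x \<in> rank ` g ` {..k}. (x, b) \<in> W"
    using Well_order_finite_max[OF W] by meson
  then obtain l0 where l0: "l0 \<le> k" "b = rank (g l0)" by auto
  have "eta ! l \<in> coords (stage b) l" if l: "l \<le> k" for l
  proof -
    have "g l \<in> stage (rank (g l))" using rank(2) g_X l by blast
    moreover have "(rank (g l), b) \<in> W" using b(2) l by auto
    ultimately have "g l \<in> stage b" using stage_mono by blast
    then show ?thesis using g l coords_mono[of "{g l}" "stage b"] by auto
  qed
  then have "eta \<in> stage b" using closed_stage eta unfolding closed_in_def by blast
  then have "(rank eta, b) \<in> W" using rank_least rank(1) g_X l0 by blast
  moreover have "b \<in> underS W a" using rank_g l0 by simp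
  ultimately have "rank eta \<in> underS W a"
    using W_lin(2,3) unfolding underS_def by (auto dest: transD antisymD)
  then show ?thesis using eta unfolding below_def by blast
qed

lemma fresh_coord:
  assumes eta: "eta \<in> X"
  shows "\<exists>l \<le> k. eta ! l \<notin> coords (below (rank eta)) l"
proof (rule ccontr)
  assume "\<not> ?thesis"
  then have "eta \<in> below (rank eta)" using mem_below_if_coords[OF eta] by blast
  then show False unfolding below_def underS_def by blast
qed

definition separable_coords :: "('a seq list \<Rightarrow> nat set) \<Rightarrow> 'a seq list \<Rightarrow> nat set" where
  "separable_coords L eta =
     {l \<in> L eta. \<exists>l' \<le> k. l' \<noteq> l \<and> eta ! l' \<notin> coords (below (rank eta)) l'}"

lemma layer_subset_stage: "layer a \<subseteq> stage a"
  unfolding layer_def using rank(2) by blast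

lemma card_separable_coords:
  assumes eta: "eta \<in> X" and fin: "finite (L eta)"
  shows "card (L eta) \<le> Suc (card (separable_coords L eta))"
proof -
  obtain l0 where l0: "l0 \<le> k" "eta ! l0 \<notin> coords (below (rank eta)) l0"
    using fresh_coord[OF eta] by blast
  have "L eta - {l0} \<subseteq> separable_coords L eta"
    using l0 unfolding separable_coords_def by blast
  then have "card (L eta - {l0}) \<le> card (separable_coords L eta)"
    using fin unfolding separable_coords_def by (intro card_mono) auto
  moreover have "card (L eta) \<le> Suc (card (L eta - {l0}))"
    using fin by (cases "l0 \<in> L eta") (simp_all add: card_Diff_singleton_if)
  ultimately show ?thesis by linarith
qed

lemma separated_at_lex_sum:
  assumes eta: "eta \<in> X" and l: "l \<in> separable_coords L eta"
    and sep: "separated_at (RR (rank eta)) (layer (rank eta)) eta l"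
  shows "separated_at (lex_sum W rank RR X) X eta l"
proof -
  obtain l' where l': "l' \<le> k" "l' \<noteq> l" "eta ! l' \<notin> coords (below (rank eta)) l'"
    using l unfolding separable_coords_def by blast
  show ?thesis
    using sep unfolding separated_at_def
  proof (rule eventually_mono, intro ballI impI)
    fix n nu
    assume sep_n: "\<forall>nu \<in> layer (rank eta). (nu, eta) \<in> RR (rank eta) \<longrightarrow>
        (nu \<noteq> eta \<longrightarrow> restr nu l n \<noteq> restr eta l n) \<and> restr eta l n \<notin> F nu"
      and nu: "nu \<in> X" "(nu, eta) \<in> lex_sum W rank RR X"
    show "(nu \<noteq> eta \<longrightarrow> restr nu l n \<noteq> restr eta l n) \<and> restr eta l n \<notin> F nu"
    proof (cases "rank nu = rank eta")
      case True
      then show ?thesis using sep_n nu unfolding lex_sum_def layer_def by auto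
    next
      case False
      then have below: "nu \<in> below (rank eta)"
        using nu unfolding lex_sum_def below_def underS_def by auto
      have "restr nu l n ! l' = nu ! l'" "restr eta l n ! l' = eta ! l'"
        using l'(2) by (simp_all add: nth_restr_other)
      moreover have "nu ! l' \<in> coords (below (rank eta)) l'"
        using below unfolding coords_def by blast
      moreover have "x ! l' \<in> coords (below (rank eta)) l'" if "x \<in> F nu" for x
        using below that unfolding coords_def by blast
      ultimately show ?thesis using l'(3) by metis
    qed
  qed
qed

lemma free_order_lex_sum:
  assumes RR: "\<And>a. a \<in> X \<Longrightarrow> free_order (layer a) (separable_coords L) (RR a)"
  shows "free_order X L (lex_sum W rank RR X)"
proof -
  have RR_wo: "Well_order (RR a) \<and> Field (RR a) = {x \<in> X. rank x = a}" if "a \<in> Field W" for a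
    using RR[of a] that Field_W unfolding free_order_def layer_def by auto
  have "rank ` X \<subseteq> Field W" using rank(1) Field_W by auto
  note wo = Well_order_lex_sum[OF W this RR_wo]
  have "(nu, eta) \<in> lex_sum W rank RR X \<and> nu \<noteq> eta" if eta: "eta \<in> X" and nu: "nu \<in> F eta \<inter> X"
    for eta nu
  proof (cases "rank nu = rank eta")
    case True
    then have "nu \<in> F eta \<inter> layer (rank eta)" "eta \<in> layer (rank eta)"
      using nu eta unfolding layer_def by auto
    then have "(nu, eta) \<in> RR (rank eta) \<and> nu \<noteq> eta"
      using RR[OF rank(1)[OF eta]] unfolding free_order_def by blast
    then show ?thesis using True nu eta unfolding lex_sum_def by auto
  next
    case False
    then show ?thesis using rank_parent[OF eta nu] nu eta unfolding lex_sum_def by auto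
  qed
  moreover have "\<exists>l \<in> L eta. separated_at (lex_sum W rank RR X) X eta l" if eta: "eta \<in> X" for eta
  proof -
    have "eta \<in> layer (rank eta)" using eta unfolding layer_def by simp
    then obtain l where "l \<in> separable_coords L eta"
        "separated_at (RR (rank eta)) (layer (rank eta)) eta l"
      using RR[OF rank(1)[OF eta]] unfolding free_order_def by blast
    then show ?thesis using separated_at_lex_sum[OF eta] unfolding separable_coords_def by blast
  qed
  ultimately show ?thesis using wo unfolding free_order_def by blast
qed

end

context regressive_function
begin

lemma free_order_Suc:
  assumes IH: "\<And>Y L. Y \<subseteq> Lam \<Longrightarrow> le_aleph j Y \<Longrightarrow>
      (\<And>eta. eta \<in> Y \<Longrightarrow> L eta \<subseteq> {..k} \<and> j < card (L eta)) \<Longrightarrow> \<exists>R. free_order Y L R"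
    and X: "X \<subseteq> Lam" and le: "le_aleph (Suc j) X"
    and L: "\<And>eta. eta \<in> X \<Longrightarrow> L eta \<subseteq> {..k} \<and> Suc j < card (L eta)"
  shows "\<exists>R. free_order X L R"
proof -
  interpret layered_family k S Lam F X "|X|"
    by unfold_locales (simp_all add: card_of_well_order_on Field_card_of)
  have "\<exists>R. free_order (layer a) (separable_coords L) R" if a: "a \<in> X" for a
  proof (rule IH)
    show "layer a \<subseteq> Lam" using X unfolding layer_def by auto
    have "le_aleph j (stage a)"
      unfolding stage_def by (rule le_aleph_closure_in[OF X under_subset le_aleph_Suc_under[OF le a]])
    then show "le_aleph j (layer a)" using layer_subset_stage le_aleph_subset by blast
    fix eta assume "eta \<in> layer a"
    then have eta: "eta \<in> X" unfolding layer_def by blast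
    have "finite (L eta)" using L[OF eta] finite_subset by blast
    then have "card (L eta) \<le> Suc (card (separable_coords L eta))"
      by (rule card_separable_coords[OF eta])
    moreover have "separable_coords L eta \<subseteq> L eta" unfolding separable_coords_def by blast
    ultimately show "separable_coords L eta \<subseteq> {..k} \<and> j < card (separable_coords L eta)"
      using L[OF eta] by auto
  qed
  then obtain RR where "\<And>a. a \<in> X \<Longrightarrow> free_order (layer a) (separable_coords L) (RR a)"
    by metis
  then show ?thesis using free_order_lex_sum by blast
qed

lemma free_order_exists:
  assumes FS: "finitary Lam F \<or> simple k Lam F"
    and "X \<subseteq> Lam" and "le_aleph j X" and "\<And>eta. eta \<in> X \<Longrightarrow> L eta \<subseteq> {..k} \<and> j < card (L eta)"
  shows "\<exists>R. free_order X L R"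
  using assms(2-4)
proof (induction j arbitrary: X L)
  case 0
  have "countable X" using 0 le_aleph_0_iff by blast
  moreover have "L eta \<subseteq> {..k} \<and> L eta \<noteq> {}" if "eta \<in> X" for eta
    using "0.prems"(3)[OF that] by auto
  ultimately show ?case
    using FS free_order_countable_finitary free_order_countable_simple \<open>X \<subseteq> Lam\<close> by blast
next
  case (Suc j)
  then show ?case using free_order_Suc[of j X L] by blast
qed

lemma free_for_if_free_order:
  assumes sub: "Lam' \<subseteq> Lam" and R: "free_order Lam' (\<lambda>_. {..k}) R"
  shows "free_for k Lam F Lam'"
proof -
  have R_wo: "Well_order R" "Field R = Lam'"
    and parents: "\<And>eta x. eta \<in> Lam' \<Longrightarrow> x \<in> F eta \<inter> Lam' \<Longrightarrow> (x, eta) \<in> R \<and> x \<noteq> eta"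
    using R unfolding free_order_def by blast+
  obtain r where r: "Well_order r" "Field r = Lam' \<union> \<Union>(F ` Lam')"
    and r_F: "\<And>eta x. eta \<in> Lam' \<Longrightarrow> x \<in> F eta \<Longrightarrow> (x, eta) \<in> r \<and> x \<noteq> eta"
    and r_old: "\<And>eta y. eta \<in> Lam' \<Longrightarrow> (y, eta) \<in> r \<Longrightarrow> y \<in> Lam' \<Longrightarrow> (y, eta) \<in> R"
    and r_new: "\<And>eta y. eta \<in> Lam' \<Longrightarrow> (y, eta) \<in> r \<Longrightarrow> y \<notin> Lam' \<Longrightarrow>
      \<exists>w \<in> Lam'. y \<in> F w \<and> (w, eta) \<in> R"
    using Well_order_extend_to_images[of R Lam' F, OF R_wo parents] by blast
  have "\<exists>l. l \<le> k \<and> (eta \<in> Lam' \<longrightarrow> separated_at R Lam' eta l)" for eta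
    using R unfolding free_order_def by auto
  then obtain ell where ell: "\<And>eta. ell eta \<le> k"
    and ell_sep: "\<And>eta. eta \<in> Lam' \<Longrightarrow> separated_at R Lam' eta (ell eta)"
    by metis
  have fresh: "\<exists>n. restr eta (ell eta) n \<notin>
      {restr nu (ell eta) n | nu. (nu, eta) \<in> r \<and> nu \<noteq> eta \<and> nu \<in> Lam'}
      \<union> {nu. (nu, eta) \<in> r \<and> nu \<noteq> eta}" if eta: "eta \<in> Lam'" for eta
  proof -
    let ?l = "ell eta"
    obtain N where N: "\<And>nu. nu \<in> Lam' \<Longrightarrow> (nu, eta) \<in> R \<Longrightarrow>
        (nu \<noteq> eta \<longrightarrow> restr nu ?l N \<noteq> restr eta ?l N) \<and> restr eta ?l N \<notin> F nu"
      using ell_sep[OF eta] unfolding separated_at_def eventually_sequentially by blast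
    have "restr eta ?l N \<notin> Lam'" using restr_notin_Lam ell sub eta by blast
    then have "(restr eta ?l N, eta) \<notin> r" using r_new[OF eta] N by blast
    moreover have "restr eta ?l N \<noteq> restr nu ?l N"
      if "(nu, eta) \<in> r" "nu \<noteq> eta" "nu \<in> Lam'" for nu
      using N r_old[OF eta] that by metis
    ultimately show ?thesis by blast
  qed
  show ?thesis
    unfolding free_for_def using r r_F ell fresh by blast
qed

end

theorem claim3p2:
  fixes k :: nat
    and S :: "'a::{wellorder, complete_linorder} set"
    and Lam :: "'a seq list set"
    and F :: "'a seq list \<Rightarrow> 'a seq list set"
  assumes "comb_param k S Lam"
    and "regressive k Lam F"
    and "finitary Lam F \<or> simple k Lam F"
  shows "\<forall>Lam'. Lam' \<subseteq> Lam \<and> le_aleph k Lam' \<longrightarrow> free_for k Lam F Lam'"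
proof (intro allI impI)
  interpret regressive_function k S Lam F
    using assms(1,2) by unfold_locales
  fix Lam' assume Lam': "Lam' \<subseteq> Lam \<and> le_aleph k Lam'"
  then obtain R where "free_order Lam' (\<lambda>_. {..k}) R"
    using free_order_exists[OF assms(3), of Lam' k "\<lambda>_. {..k}"] by auto
  then show "free_for k Lam F Lam'"
    using free_for_if_free_order Lam' by blast
qed

end
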